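(* Let $X_1,\dots,X_\ell$ be variables for complex square matrices, $\iota:[k]\to[\ell]$ and $\tau:[k]\to\{1,*\}$, and let $P=\prod_{j\in[k]}X_{\iota(j)}^{\tau(j)}$. Then for every $n\in\mathbb N$ and every choice of $A_1,\dots,A_\ell\in\mathbb C^{n\times n}$ all eigenvalues of $P(A_1,\dots,A_\ell)$ are real if and only if $P$ is self-adjoint.
   Context: $X^*$ denotes the Hermitian adjoint (conjugate transpose). Formal adjoint acts on words by $(X_i^1)^*=X_i^*$, $(X_i^* )^*=X_i$, $(W_1W_2)^*=W_2^*W_1^*$. $P(A_1,\dots,A_\ell)$ is obtained by substituting $A_i$ for $X_i$ and $A_i^*$ for $X_i^*$ and multiplying. $P$ is called self-adjoint if $k$ is even and there exists $j\in[k]$ such that, with indices modulo $k$, the cyclically shifted word $\prod_{i=j+1}^{j+k}X_{\iota(i)}^{\tau(i)}$ equals $LL^*$ as a formal word, where $L=\prod_{i=j+1}^{j+k/2}X_{\iota(i)}^{\tau(i)}$. *)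

theory Defs
  imports "Jordan_Normal_Form.Schur_Decomposition" "Jordan_Normal_Form.Char_Poly"
begin

text \<open>A word P = prod_{j in [k]} X_{iota j}^{tau j} is encoded as a list of letters
  (iota j, tau j) :: nat \<times> bool, where the index is 0-based (i < l stands for X_{i+1})
  and the boolean is True iff the letter is starred (X^*), False iff it is X^1.\<close>

type_synonym word = "(nat \<times> bool) list"

definition word_adjoint :: "word \<Rightarrow> word" where
  "word_adjoint w = rev (map (\<lambda>(i, s). (i, \<not> s)) w)"

text \<open>Self-adjointness: k even and some cyclic shift equals L L^*, L its first half.
  rotate j w is the word starting at (1-based) letter j+1; j ranges over [k] (j = k
  gives the same shift as j = 0).\<close>
definition self_adjoint_word :: "word \<Rightarrow> bool" where
  "self_adjoint_word w \<longleftrightarrow> even (length w) \<and>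
     (\<exists>j < length w. let L = take (length w div 2) (rotate j w)
                      in rotate j w = L @ word_adjoint L)"

definition eval_word :: "nat \<Rightarrow> (nat \<Rightarrow> complex mat) \<Rightarrow> word \<Rightarrow> complex mat" where
  "eval_word n A w = foldr (\<lambda>(i, s) M. (if s then mat_adjoint (A i) else A i) * M) w (1\<^sub>m n)"

end

theory Submission
  imports Defs
begin

(*
  If a rotation of P has the form L L^*, then P(A) and the evaluated rotation, a Gram matrix
  M M^*, share their nonzero eigenvalues, which are therefore nonnegative.

  Conversely, let k be the length of P and realise its letters as weighted steps on a k-cycle:
  the matrix of X_i carries omega = exp(i pi / (2k)) on the edge a -> a+1 whenever the a-th
  letter of P is X_i, and cnj omega on the reverse edge whenever it is X_i^*. Expanding the
  product, the diagonal entries of P(A) count the closed walks reading P, each weighted by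
  omega^d for its displacement d in {-k, 0, k}, so Im tr P(A) is the number of walks winding
  once forward minus the number winding once backward. Following P forward from position 0 is
  always such a walk, while a backward one from position a forces P to be the adjoint of its
  rotation by a, which makes P self-adjoint. Hence for P not self-adjoint tr P(A) is not real,
  and neither are all eigenvalues of P(A).
*)

section \<open>Adjoint matrices\<close>

lemma carrier_mat_adjoint [intro]: "A \<in> carrier_mat n m \<Longrightarrow> mat_adjoint A \<in> carrier_mat m n"
  unfolding mat_adjoint_def by auto

lemma dim_row_mat_adjoint [simp]: "dim_row (mat_adjoint A) = dim_col A"
  and dim_col_mat_adjoint [simp]: "dim_col (mat_adjoint A) = dim_row A"
  unfolding mat_adjoint_def by auto

lemma index_mat_adjoint:
  "A \<in> carrier_mat n m \<Longrightarrow> i < m \<Longrightarrow> j < n \<Longrightarrow> mat_adjoint A $$ (i, j) = conjugate (A $$ (j, i))"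
  unfolding mat_adjoint_def by (auto simp: mat_of_rows_def)

lemma mat_adjoint_mat_adjoint [simp]:
  assumes A: "A \<in> carrier_mat n m"
  shows "mat_adjoint (mat_adjoint A) = A"
proof (rule eq_matI)
  fix i j assume "i < dim_row A" "j < dim_col A"
  with A show "mat_adjoint (mat_adjoint A) $$ (i, j) = A $$ (i, j)"
    by (simp add: index_mat_adjoint[OF carrier_mat_adjoint[OF A]] index_mat_adjoint[OF A])
qed auto

lemma conjugate_one [simp]: "conjugate (1 :: 'a :: conjugatable_field) = 1"
  by (metis conjugate_dist_mul conjugate_id mult_1_left mult_1_right)

lemma mat_adjoint_one [simp]: "mat_adjoint (1\<^sub>m n :: 'a :: conjugatable_field mat) = 1\<^sub>m n"
  by (rule eq_matI) (auto simp: index_mat_adjoint[of _ n n])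

lemma mat_adjoint_mult:
  fixes A B :: "'a :: conjugatable_field mat"
  assumes A: "A \<in> carrier_mat n m" and B: "B \<in> carrier_mat m p"
  shows "mat_adjoint (A * B) = mat_adjoint B * mat_adjoint A"
proof (rule eq_matI)
  fix i j assume "i < dim_row (mat_adjoint B * mat_adjoint A)" "j < dim_col (mat_adjoint B * mat_adjoint A)"
  with A B have "i < p" "j < n" by auto
  with A B show "mat_adjoint (A * B) $$ (i, j) = (mat_adjoint B * mat_adjoint A) $$ (i, j)"
    by (auto simp: index_mat_adjoint[of _ n p] index_mat_adjoint[of _ n m] index_mat_adjoint[of _ m p]
        scalar_prod_def sum_conjugate conjugate_dist_mul mult.commute intro!: sum.cong)
qed (use A B in auto)

lemma cscalar_prod_mult_mat_vec:
  fixes M :: "'a :: conjugatable_field mat"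
  assumes M: "M \<in> carrier_mat n m" and x: "x \<in> carrier_vec m" and y: "y \<in> carrier_vec n"
  shows "(M *\<^sub>v x) \<bullet>c y = x \<bullet>c (mat_adjoint M *\<^sub>v y)"
proof -
  have "(M *\<^sub>v x) \<bullet>c y = (\<Sum>i<n. \<Sum>j<m. M $$ (i, j) * x $ j * conjugate (y $ i))"
    using M x y by (auto simp: scalar_prod_def sum_distrib_right lessThan_atLeast0 mult.assoc intro!: sum.cong)
  also have "\<dots> = (\<Sum>j<m. \<Sum>i<n. x $ j * conjugate (conjugate (M $$ (i, j)) * y $ i))"
    by (subst sum.swap) (simp add: conjugate_dist_mul ac_simps)
  also have "\<dots> = x \<bullet>c (mat_adjoint M *\<^sub>v y)"
    using M x y by (auto simp: scalar_prod_def sum_distrib_left sum_conjugate lessThan_atLeast0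
        index_mat_adjoint[OF M] intro!: sum.cong)
  finally show ?thesis .
qed

lemma complex_nonneg_if_mult_pos_nonneg:
  fixes p q \<mu> :: complex
  assumes "\<mu> * p = q" "q \<ge> 0" "p > 0"
  shows "\<mu> \<ge> 0"
proof -
  have "Im \<mu> * Re p = 0" "Re \<mu> * Re p \<ge> 0" "Re p > 0"
    using assms by (auto simp: less_eq_complex_def less_complex_def dest: arg_cong[of _ _ Im] arg_cong[of _ _ Re])
  then show ?thesis by (simp add: less_eq_complex_def zero_le_mult_iff)
qed

lemma eigenvalue_mult_mat_adjoint_nonneg:
  fixes B :: "complex mat"
  assumes B: "B \<in> carrier_mat n n" and ev: "eigenvalue (B * mat_adjoint B) \<mu>"
  shows "\<mu> \<ge> 0"
proof -
  from ev obtain v where "eigenvector (B * mat_adjoint B) v \<mu>"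
    unfolding eigenvalue_def by blast
  then have v: "v \<in> carrier_vec n" "v \<noteq> 0\<^sub>v n" and eq: "(B * mat_adjoint B) *\<^sub>v v = \<mu> \<cdot>\<^sub>v v"
    using B unfolding eigenvector_def by auto
  define u where "u = mat_adjoint B *\<^sub>v v"
  have u: "u \<in> carrier_vec n"
    unfolding u_def using carrier_mat_adjoint[OF B] v(1) by (rule mult_mat_vec_carrier)
  have "B *\<^sub>v u = (B * mat_adjoint B) *\<^sub>v v"
    unfolding u_def by (rule assoc_mult_mat_vec[OF B carrier_mat_adjoint[OF B] v(1), symmetric])
  also have "\<dots> = \<mu> \<cdot>\<^sub>v v" by (rule eq)
  finally have "B *\<^sub>v u = \<mu> \<cdot>\<^sub>v v" .
  then have "\<mu> * (v \<bullet>c v) = (B *\<^sub>v u) \<bullet>c v"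
    using v by (simp add: smult_scalar_prod_distrib[of v n])
  also have "\<dots> = u \<bullet>c u"
    using cscalar_prod_mult_mat_vec[OF B u v(1)] unfolding u_def .
  finally have "\<mu> * (v \<bullet>c v) = u \<bullet>c u" .
  moreover have "u \<bullet>c u \<ge> 0" by (rule conjugate_square_ge_0_vec)
  moreover have "v \<bullet>c v > 0" using conjugate_square_greater_0_vec[OF v(1)] v(2) by blast
  ultimately show ?thesis by (rule complex_nonneg_if_mult_pos_nonneg)
qed

lemma eigenvalue_mult_swap:
  fixes U V :: "'a :: field mat"
  assumes U: "U \<in> carrier_mat n n" and V: "V \<in> carrier_mat n n"
    and ev: "eigenvalue (U * V) \<mu>" and nz: "\<mu> \<noteq> 0"
  shows "eigenvalue (V * U) \<mu>"
proof -
  from ev obtain v where "eigenvector (U * V) v \<mu>"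
    unfolding eigenvalue_def by blast
  then have v: "v \<in> carrier_vec n" "v \<noteq> 0\<^sub>v n" and eq: "(U * V) *\<^sub>v v = \<mu> \<cdot>\<^sub>v v"
    using U unfolding eigenvector_def by auto
  have Vv: "V *\<^sub>v v \<in> carrier_vec n" using V v(1) by (rule mult_mat_vec_carrier)
  have UVv: "U *\<^sub>v (V *\<^sub>v v) = \<mu> \<cdot>\<^sub>v v"
    using eq unfolding assoc_mult_mat_vec[OF U V v(1)] .
  have "(V * U) *\<^sub>v (V *\<^sub>v v) = V *\<^sub>v (\<mu> \<cdot>\<^sub>v v)"
    unfolding assoc_mult_mat_vec[OF V U Vv] UVv ..
  also have "\<dots> = \<mu> \<cdot>\<^sub>v (V *\<^sub>v v)"
    using V v(1) by (rule mult_mat_vec)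
  finally have "(V * U) *\<^sub>v (V *\<^sub>v v) = \<mu> \<cdot>\<^sub>v (V *\<^sub>v v)" .
  moreover have "V *\<^sub>v v \<noteq> 0\<^sub>v n"
  proof
    assume "V *\<^sub>v v = 0\<^sub>v n"
    moreover have "U *\<^sub>v 0\<^sub>v n = 0\<^sub>v n" using U by auto
    ultimately have "\<mu> \<cdot>\<^sub>v v = 0\<^sub>v n" using UVv by simp
    moreover obtain i where "i < n" "v $ i \<noteq> 0"
      using v by (metis eq_vecI carrier_vecD index_zero_vec)
    ultimately show False
      using nz by (metis index_smult_vec(1) index_zero_vec(1) carrier_vecD[OF v(1)] mult_eq_0_iff)
  qed
  ultimately show ?thesis
    using Vv V unfolding eigenvalue_def eigenvector_def by auto
qed

definition adjoint_letter :: "nat \<times> bool \<Rightarrow> nat \<times> bool" where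
  "adjoint_letter x = (fst x, \<not> snd x)"

definition eval_letter :: "(nat \<Rightarrow> complex mat) \<Rightarrow> nat \<times> bool \<Rightarrow> complex mat" where
  "eval_letter A x = (if snd x then mat_adjoint (A (fst x)) else A (fst x))"

lemma adjoint_letter_adjoint_letter [simp]: "adjoint_letter (adjoint_letter x) = x"
  by (simp add: adjoint_letter_def)

lemma adjoint_letter_neq [simp]: "adjoint_letter x \<noteq> x" "x \<noteq> adjoint_letter x"
  by (simp_all add: adjoint_letter_def prod_eq_iff)

lemma fst_adjoint_letter [simp]: "fst (adjoint_letter x) = fst x"
  by (simp add: adjoint_letter_def)

lemma length_word_adjoint [simp]: "length (word_adjoint v) = length v"
  by (simp add: word_adjoint_def)

lemma word_adjoint_Nil [simp]: "word_adjoint [] = []"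
  by (simp add: word_adjoint_def)

lemma word_adjoint_Cons: "word_adjoint (x # v) = word_adjoint v @ [adjoint_letter x]"
  by (simp add: word_adjoint_def adjoint_letter_def split: prod.split)

lemma word_adjoint_append: "word_adjoint (u @ v) = word_adjoint v @ word_adjoint u"
  by (simp add: word_adjoint_def)

lemma nth_word_adjoint:
  "t < length v \<Longrightarrow> word_adjoint v ! t = adjoint_letter (v ! (length v - Suc t))"
  by (simp add: word_adjoint_def rev_nth adjoint_letter_def split: prod.split)

lemma set_word_adjoint [simp]: "set (word_adjoint v) = adjoint_letter ` set v"
  by (force simp: word_adjoint_def adjoint_letter_def)

lemma rotate_word_adjoint:
  "rotate n (word_adjoint v) = word_adjoint (rotate (length v - n mod length v) v)"
  by (simp add: word_adjoint_def rotate_rev rotate_map)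

lemma eval_word_Nil [simp]: "eval_word n A [] = 1\<^sub>m n"
  by (simp add: eval_word_def)

lemma eval_word_Cons [simp]: "eval_word n A (x # v) = eval_letter A x * eval_word n A v"
  by (cases x) (simp add: eval_word_def eval_letter_def)

lemma carrier_eval_letter:
  "A (fst x) \<in> carrier_mat n n \<Longrightarrow> eval_letter A x \<in> carrier_mat n n"
  by (auto simp: eval_letter_def)

lemma carrier_eval_word:
  "\<forall>x \<in> set v. A (fst x) \<in> carrier_mat n n \<Longrightarrow> eval_word n A v \<in> carrier_mat n n"
  by (induction v) (auto intro!: mult_carrier_mat carrier_eval_letter)

lemma eval_word_append:
  assumes "\<forall>x \<in> set u. A (fst x) \<in> carrier_mat n n" "\<forall>x \<in> set v. A (fst x) \<in> carrier_mat n n"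
  shows "eval_word n A (u @ v) = eval_word n A u * eval_word n A v"
  using assms
proof (induction u)
  case (Cons x u)
  have "eval_letter A x \<in> carrier_mat n n" "eval_word n A u \<in> carrier_mat n n"
    "eval_word n A v \<in> carrier_mat n n"
    using Cons.prems by (auto intro: carrier_eval_letter carrier_eval_word)
  with Cons show ?case by (simp add: assoc_mult_mat[of _ n n _ n _ n])
qed (auto dest: carrier_eval_word)

lemma eval_letter_adjoint_letter:
  "A (fst x) \<in> carrier_mat n n \<Longrightarrow> eval_letter A (adjoint_letter x) = mat_adjoint (eval_letter A x)"
  by (auto simp: eval_letter_def adjoint_letter_def)

lemma eval_word_word_adjoint:
  "\<forall>x \<in> set v. A (fst x) \<in> carrier_mat n n \<Longrightarrow>
    eval_word n A (word_adjoint v) = mat_adjoint (eval_word n A v)"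
proof (induction v)
  case (Cons x v)
  then have Ax: "A (fst x) \<in> carrier_mat n n" by simp
  then have x: "eval_letter A x \<in> carrier_mat n n" by (rule carrier_eval_letter)
  have v: "eval_word n A v \<in> carrier_mat n n"
    using Cons.prems by (simp add: carrier_eval_word)
  have "eval_word n A (word_adjoint (x # v)) = eval_word n A (word_adjoint v) * eval_word n A [adjoint_letter x]"
    unfolding word_adjoint_Cons using Cons.prems by (intro eval_word_append) auto
  also have "\<dots> = mat_adjoint (eval_word n A v) * mat_adjoint (eval_letter A x)"
    using Cons right_mult_one_mat[OF carrier_mat_adjoint[OF x]]
    by (simp add: eval_letter_adjoint_letter[of A x, OF Ax])
  also have "\<dots> = mat_adjoint (eval_word n A (x # v))"
    using mat_adjoint_mult[OF x v] by simp
  finally show ?case .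
qed simp

lemma eigenvalue_eval_word_rotate:
  assumes A: "\<forall>x \<in> set w. A (fst x) \<in> carrier_mat n n"
    and ev: "eigenvalue (eval_word n A w) \<mu>" and nz: "\<mu> \<noteq> 0"
  shows "eigenvalue (eval_word n A (rotate j w)) \<mu>"
proof -
  define m where "m = j mod length w"
  have take: "\<forall>x \<in> set (take m w). A (fst x) \<in> carrier_mat n n"
    and drop: "\<forall>x \<in> set (drop m w). A (fst x) \<in> carrier_mat n n"
    using A by (auto dest: in_set_takeD in_set_dropD)
  have "eigenvalue (eval_word n A (take m w) * eval_word n A (drop m w)) \<mu>"
    using ev eval_word_append[OF take drop] by simp
  then have "eigenvalue (eval_word n A (drop m w) * eval_word n A (take m w)) \<mu>"
    by (rule eigenvalue_mult_swap[OF carrier_eval_word[OF take] carrier_eval_word[OF drop] _ nz])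
  then show ?thesis
    unfolding rotate_drop_take m_def[symmetric] eval_word_append[OF drop take] .
qed

lemma eigenvalue_eval_self_adjoint_word_nonneg:
  assumes sa: "self_adjoint_word w" and A: "\<forall>x \<in> set w. A (fst x) \<in> carrier_mat n n"
    and ev: "eigenvalue (eval_word n A w) \<mu>"
  shows "\<mu> \<ge> 0"
proof (cases "\<mu> = 0")
  case False
  from sa obtain j where
    "rotate j w = take (length w div 2) (rotate j w) @ word_adjoint (take (length w div 2) (rotate j w))"
    unfolding self_adjoint_word_def Let_def by blast
  then obtain L where L: "rotate j w = L @ word_adjoint L" by blast
  have AL: "\<forall>x \<in> set L. A (fst x) \<in> carrier_mat n n"
    using A arg_cong[OF L, of set] by auto
  have "eval_word n A (rotate j w) = eval_word n A L * mat_adjoint (eval_word n A L)"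
    unfolding L using AL
    by (simp add: eval_word_append eval_word_word_adjoint)
  moreover have "eigenvalue (eval_word n A (rotate j w)) \<mu>"
    using A ev False by (rule eigenvalue_eval_word_rotate)
  ultimately show ?thesis
    using eigenvalue_mult_mat_adjoint_nonneg[OF carrier_eval_word[OF AL]] by simp
qed simp

definition trace :: "'a :: comm_ring mat \<Rightarrow> 'a" where
  "trace A = (\<Sum>i<dim_row A. A $$ (i, i))"

lemma trace_mult_comm:
  fixes X Y :: "'a :: comm_ring mat"
  assumes "X \<in> carrier_mat n m" "Y \<in> carrier_mat m n"
  shows "trace (X * Y) = trace (Y * X)"
proof -
  have "trace (X * Y) = (\<Sum>i<n. \<Sum>j<m. X $$ (i, j) * Y $$ (j, i))"
    using assms by (auto simp: trace_def scalar_prod_def lessThan_atLeast0 intro!: sum.cong)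
  also have "\<dots> = (\<Sum>j<m. \<Sum>i<n. Y $$ (j, i) * X $$ (i, j))"
    by (subst sum.swap) (simp add: mult.commute)
  also have "\<dots> = trace (Y * X)"
    using assms by (auto simp: trace_def scalar_prod_def lessThan_atLeast0 intro!: sum.cong)
  finally show ?thesis .
qed

lemma trace_eq_sum_eigenvalues:
  fixes A :: "complex mat"
  assumes A: "A \<in> carrier_mat n n"
  obtains f where "trace A = (\<Sum>i<n. f i)" "\<forall>i<n. eigenvalue A (f i)"
proof -
  obtain es where "char_poly A = (\<Prod>a\<leftarrow>es. [:- a, 1:])"
    using char_poly_factorized[OF A] by blast
  then obtain B where B: "B \<in> carrier_mat n n" "upper_triangular B" and sim: "similar_mat A B"
    using schur_decomposition_exists[OF A] by blast
  then obtain P Q where PQ: "P \<in> carrier_mat n n" "Q \<in> carrier_mat n n" "Q * P = 1\<^sub>m n" "A = P * B * Q"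
    using A unfolding similar_mat_def similar_mat_wit_def Let_def by auto
  have "trace A = trace (P * (B * Q))"
    using PQ B by (simp add: assoc_mult_mat[of P n n B n Q n])
  also have "\<dots> = trace (B * Q * P)"
    using PQ B by (intro trace_mult_comm[of _ n n]) auto
  also have "\<dots> = (\<Sum>i<n. B $$ (i, i))"
    using PQ B by (simp add: assoc_mult_mat[of B n n Q n P n] trace_def)
  finally have "trace A = (\<Sum>i<n. B $$ (i, i))" .
  moreover have "eigenvalue A (B $$ (i, i))" if "i < n" for i
  proof -
    have "B $$ (i, i) \<in> set (diag_mat B)"
      using that B unfolding diag_mat_def by auto
    then have "poly (char_poly B) (B $$ (i, i)) = 0"
      unfolding char_poly_upper_triangular[OF B] poly_prod_list by (auto simp: prod_list_zero_iff)
    then show ?thesis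
      unfolding eigenvalue_root_char_poly[OF A] char_poly_similar[OF sim] .
  qed
  ultimately show ?thesis using that by blast
qed

section \<open>Words that are adjoints of their rotations\<close>

lemma eq_word_adjoint_imp_split:
  assumes u: "u = word_adjoint u"
  defines "h \<equiv> length u div 2"
  shows "even (length u) \<and> u = take h u @ word_adjoint (take h u)"
proof
  show even: "even (length u)"
  proof (rule ccontr)
    assume "odd (length u)"
    then have h: "h < length u" "length u - Suc h = h"
      unfolding h_def by presburger+
    from u have "u ! h = word_adjoint u ! h" by (rule arg_cong)
    also have "\<dots> = adjoint_letter (u ! h)" using h by (simp add: nth_word_adjoint)
    finally show False by simp
  qed
  have "take h u @ drop h u = word_adjoint (drop h u) @ word_adjoint (take h u)"
    using u by (metis append_take_drop_id word_adjoint_append)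
  moreover have "length (take h u) = length (word_adjoint (drop h u))"
    using even unfolding h_def by auto
  ultimately show "u = take h u @ word_adjoint (take h u)"
    by (metis append_eq_append_conv append_take_drop_id)
qed

lemma neq_word_adjoint_rotate1: "u \<noteq> [] \<Longrightarrow> u \<noteq> word_adjoint (rotate1 u)"
  by (cases u) (auto simp: word_adjoint_append word_adjoint_Cons)

(* The rotation u of w by r div 2 satisfies u = word_adjoint (rotate (r mod 2) u). *)
lemma self_adjoint_word_if_eq_word_adjoint_rotate:
  assumes "w \<noteq> []" and w: "w = word_adjoint (rotate r w)"
  shows "self_adjoint_word w"
proof -
  define k j where "k = length w" and "j = r div 2"
  have k: "0 < k" using assms(1) unfolding k_def by simp
  have "2 * j + r mod 2 = r" unfolding j_def by simp
  then have "k - j mod k + r = (r mod 2 + j) + k * (j div k + 1)"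
    by (subst distrib_left) (use mod_less_divisor[OF k, of j] mult_div_mod_eq[of k j] in linarith)
  then have shift: "(k - j mod k + r) mod k = (r mod 2 + j) mod k"
    by (metis mod_mult_self2)
  have "rotate j w = rotate j (word_adjoint (rotate r w))"
    using arg_cong[OF w, of "rotate j"] .
  also have "\<dots> = word_adjoint (rotate (k - j mod k + r) w)"
    by (simp add: rotate_word_adjoint rotate_rotate k_def)
  also have "\<dots> = word_adjoint (rotate (r mod 2) (rotate j w))"
    by (metis shift k_def rotate_conv_mod rotate_rotate)
  finally have u: "rotate j w = word_adjoint (rotate (r mod 2) (rotate j w))" .
  have "r mod 2 = 0"
  proof (rule ccontr)
    assume "r mod 2 \<noteq> 0"
    then have "r mod 2 = 1" by simp
    then have "rotate j w = word_adjoint (rotate1 (rotate j w))"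
      using u by simp
    then show False using neq_word_adjoint_rotate1 assms(1) by simp
  qed
  then have "rotate j w = word_adjoint (rotate j w)" using u by simp
  then have "rotate (j mod k) w =
      take (k div 2) (rotate (j mod k) w) @ word_adjoint (take (k div 2) (rotate (j mod k) w))"
    and "even k"
    using eq_word_adjoint_imp_split[of "rotate j w"] by (simp_all add: k_def flip: rotate_conv_mod)
  then show ?thesis
    unfolding self_adjoint_word_def Let_def k_def[symmetric] using k by (auto intro!: exI[of _ "j mod k"])
qed

section \<open>Weighted walks on the cycle of positions\<close>

definition cyclic_index :: "nat \<Rightarrow> int \<Rightarrow> nat" where
  "cyclic_index k x = nat (x mod int k)"

lemma cyclic_index_less: "0 < k \<Longrightarrow> cyclic_index k x < k"
  by (simp add: cyclic_index_def nat_less_iff)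

lemma cyclic_index_of_nat [simp]: "cyclic_index k (int a) = a mod k"
  by (simp add: cyclic_index_def flip: of_nat_mod)

lemma cyclic_index_eq_iff:
  "0 < k \<Longrightarrow> cyclic_index k x = cyclic_index k y \<longleftrightarrow> int k dvd x - y"
  by (simp add: cyclic_index_def nat_eq_iff mod_eq_dvd_iff)

lemma cyclic_index_succ:
  "0 < k \<Longrightarrow> cyclic_index k (int (cyclic_index k x) + 1) = cyclic_index k (x + 1)"
  by (simp add: cyclic_index_def mod_add_left_eq)

lemma cyclic_index_eq_succ_iff:
  assumes k: "0 < k" and e: "e < k"
  shows "cyclic_index k x = cyclic_index k (int e + 1) \<longleftrightarrow> e = cyclic_index k (x - 1)"
proof -
  have "cyclic_index k x = cyclic_index k (int e + 1) \<longleftrightarrow> int k dvd x - (int e + 1)"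
    using k by (rule cyclic_index_eq_iff)
  also have "\<dots> \<longleftrightarrow> int k dvd int e - (x - 1)"
    by (subst dvd_diff_commute) (simp add: algebra_simps)
  also have "\<dots> \<longleftrightarrow> e = cyclic_index k (x - 1)"
    using cyclic_index_eq_iff[OF k, of "int e" "x - 1"] e by simp
  finally show ?thesis .
qed

definition cyclic_letter :: "word \<Rightarrow> int \<Rightarrow> nat \<times> bool" where
  "cyclic_letter w x = w ! cyclic_index (length w) x"

definition cycle_mat :: "word \<Rightarrow> complex \<Rightarrow> nat \<Rightarrow> complex mat" where
  "cycle_mat w z i = mat (length w) (length w) (\<lambda>(a, b).
     (if b = cyclic_index (length w) (int a + 1) \<and> w ! a = (i, False) then z else 0) +
     (if a = cyclic_index (length w) (int b + 1) \<and> w ! b = (i, True) then cnj z else 0))"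

lemma carrier_cycle_mat [simp]: "cycle_mat w z i \<in> carrier_mat (length w) (length w)"
  by (simp add: cycle_mat_def)

lemma index_eval_letter_cycle_mat:
  assumes "a < length w" "b < length w"
  shows "eval_letter (cycle_mat w z) c $$ (a, b) =
    (if b = cyclic_index (length w) (int a + 1) \<and> w ! a = c then z else 0) +
    (if a = cyclic_index (length w) (int b + 1) \<and> w ! b = adjoint_letter c then cnj z else 0)"
proof (cases c)
  case (Pair i s)
  show ?thesis
  proof (cases s)
    case True
    then have "eval_letter (cycle_mat w z) c $$ (a, b) = cnj (cycle_mat w z i $$ (b, a))"
      using assms Pair by (simp add: eval_letter_def index_mat_adjoint[OF carrier_cycle_mat])
    then show ?thesis
      using assms Pair True by (simp add: cycle_mat_def adjoint_letter_def add.commute)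
  next
    case False
    then show ?thesis
      using assms Pair by (simp add: eval_letter_def cycle_mat_def adjoint_letter_def)
  qed
qed

lemma index_eval_letter_cycle_mat_mult:
  assumes w: "w \<noteq> []" and N: "N \<in> carrier_mat (length w) (length w)" and b: "b < length w"
  defines "k \<equiv> length w"
  shows "(eval_letter (cycle_mat w z) c * N) $$ (cyclic_index k x, b) =
    (if cyclic_letter w x = c then z * N $$ (cyclic_index k (x + 1), b) else 0) +
    (if cyclic_letter w (x - 1) = adjoint_letter c then cnj z * N $$ (cyclic_index k (x - 1), b) else 0)"
proof -
  let ?M = "eval_letter (cycle_mat w z) c"
  define a where "a = cyclic_index k x"
  have k: "0 < k" using w unfolding k_def by simp
  have a: "a < k" unfolding a_def using k by (rule cyclic_index_less)
  have row: "?M $$ (a, e) * N $$ (e, b) =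
      (if cyclic_letter w x = c then (if e = cyclic_index k (x + 1) then z * N $$ (e, b) else 0) else 0) +
      (if cyclic_letter w (x - 1) = adjoint_letter c
       then (if e = cyclic_index k (x - 1) then cnj z * N $$ (e, b) else 0) else 0)"
    if "e < k" for e
    using index_eval_letter_cycle_mat[of a w e z c] a that
      cyclic_index_eq_succ_iff[OF k that, of x] cyclic_index_succ[OF k, of x]
    unfolding cyclic_letter_def k_def[symmetric] a_def[symmetric] by (auto simp: distrib_right)
  have M: "?M \<in> carrier_mat k k" unfolding k_def by (rule carrier_eval_letter) simp
  have "(?M * N) $$ (a, b) = (\<Sum>e<k. ?M $$ (a, e) * N $$ (e, b))"
    using a b N M unfolding k_def by (auto simp: scalar_prod_def lessThan_atLeast0 intro!: sum.cong)
  also have "\<dots> = (\<Sum>e<k.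
      (if cyclic_letter w x = c then (if e = cyclic_index k (x + 1) then z * N $$ (e, b) else 0) else 0) +
      (if cyclic_letter w (x - 1) = adjoint_letter c
       then (if e = cyclic_index k (x - 1) then cnj z * N $$ (e, b) else 0) else 0))"
    by (intro sum.cong refl row) simp
  also have "\<dots> = (if cyclic_letter w x = c then z * N $$ (cyclic_index k (x + 1), b) else 0) +
    (if cyclic_letter w (x - 1) = adjoint_letter c then cnj z * N $$ (cyclic_index k (x - 1), b) else 0)"
    using cyclic_index_less[OF k]
    by (cases "cyclic_letter w x = c"; cases "cyclic_letter w (x - 1) = adjoint_letter c")
      (simp_all add: sum.distrib sum.delta)
  finally show ?thesis unfolding a_def .
qed

(* Walks on the integers, the universal cover of the cycle: reading the letter c at x one may
   step to x + 1 if position x carries c, and to x - 1 if position x - 1 carries c^*. *)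
fun walk_count :: "word \<Rightarrow> word \<Rightarrow> int \<Rightarrow> int \<Rightarrow> nat" where
  "walk_count w [] x d = (if d = 0 then 1 else 0)"
| "walk_count w (c # v) x d =
     (if cyclic_letter w x = c then walk_count w v (x + 1) (d - 1) else 0) +
     (if cyclic_letter w (x - 1) = adjoint_letter c then walk_count w v (x - 1) (d + 1) else 0)"

lemma walk_count_eq_0: "int (length v) < \<bar>d\<bar> \<Longrightarrow> walk_count w v x d = 0"
  by (induction v arbitrary: x d) auto

lemma walk_count_forward:
  "walk_count w v x (int (length v)) =
    (if \<forall>t < length v. v ! t = cyclic_letter w (x + int t) then 1 else 0)"
proof (induction v arbitrary: x)
  case (Cons c v)
  have "walk_count w v (x - 1) (int (length (c # v)) + 1) = 0"
    by (rule walk_count_eq_0) simp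
  then show ?case
    using Cons.IH[of "x + 1"] by (auto simp: All_less_Suc2 add_ac)
qed simp

lemma walk_count_backward:
  "walk_count w v x (- int (length v)) =
    (if \<forall>t < length v. cyclic_letter w (x - 1 - int t) = adjoint_letter (v ! t) then 1 else 0)"
proof (induction v arbitrary: x)
  case (Cons c v)
  have "walk_count w v (x + 1) (- int (length (c # v)) - 1) = 0"
    by (rule walk_count_eq_0) simp
  then show ?case
    using Cons.IH[of "x - 1"] by (auto simp: All_less_Suc2 algebra_simps)
qed simp

lemma interval_subset_image_shift:
  fixes s :: int
  assumes "{- int (Suc n) .. int (Suc n)} \<subseteq> S" "\<bar>s\<bar> \<le> 1"
  shows "{- int n .. int n} \<subseteq> (\<lambda>d. d + s) ` S"
proof
  fix e assume "e \<in> {- int n .. int n}"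
  then have "e - s \<in> {- int (Suc n) .. int (Suc n)}" using assms(2) by (auto simp: abs_le_iff)
  then have "e - s \<in> S" using assms(1) by blast
  then show "e \<in> (\<lambda>d. d + s) ` S" by (rule rev_image_eqI) simp
qed

definition walk_sum :: "word \<Rightarrow> complex \<Rightarrow> word \<Rightarrow> int \<Rightarrow> nat \<Rightarrow> int set \<Rightarrow> complex" where
  "walk_sum w z v x b S = (\<Sum>d\<in>S. if cyclic_index (length w) (x + d) = b
     then of_nat (walk_count w v x d) * z powi d else 0)"

lemma walk_sum_Nil:
  "finite S \<Longrightarrow> 0 \<in> S \<Longrightarrow> walk_sum w z [] x b S = (if cyclic_index (length w) x = b then 1 else 0)"
proof -
  assume "finite S" "0 \<in> S"
  have "walk_sum w z [] x b S = (\<Sum>d\<in>S. if d = 0 then (if cyclic_index (length w) x = b then 1 else 0) else 0)"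
    unfolding walk_sum_def by (rule sum.cong) auto
  with \<open>finite S\<close> \<open>0 \<in> S\<close> show ?thesis by simp
qed

lemma walk_sum_Cons:
  assumes z: "cnj z * z = 1"
  shows "walk_sum w z (c # v) x b S =
    (if cyclic_letter w x = c then z * walk_sum w z v (x + 1) b ((\<lambda>d. d - 1) ` S) else 0) +
    (if cyclic_letter w (x - 1) = adjoint_letter c
     then cnj z * walk_sum w z v (x - 1) b ((\<lambda>d. d + 1) ` S) else 0)"
proof -
  let ?k = "length w"
  have z0: "z \<noteq> 0" using z by auto
  have zf: "z * (n * z powi (d - 1)) = n * z powi d" for n d
    using power_int_minus_mult[of z d] z0 by (simp add: ac_simps)
  have zb: "cnj z * (n * z powi (d + 1)) = n * z powi d" for n d
  proof -
    have "cnj z * (n * z powi (d + 1)) = n * ((cnj z * z) * z powi d)"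
      unfolding power_int_add_1'[OF disjI1[OF z0]] by (simp add: ac_simps)
    then show ?thesis using z by simp
  qed
  have fwd: "z * walk_sum w z v (x + 1) b ((\<lambda>d. d - 1) ` S) = (\<Sum>d\<in>S. if cyclic_index ?k (x + d) = b
      then of_nat (walk_count w v (x + 1) (d - 1)) * z powi d else 0)"
    unfolding walk_sum_def sum_distrib_left
    by (subst sum.reindex) (auto simp: inj_on_def zf intro!: sum.cong)
  have bwd: "cnj z * walk_sum w z v (x - 1) b ((\<lambda>d. d + 1) ` S) = (\<Sum>d\<in>S. if cyclic_index ?k (x + d) = b
      then of_nat (walk_count w v (x - 1) (d + 1)) * z powi d else 0)"
    unfolding walk_sum_def sum_distrib_left
    by (subst sum.reindex) (auto simp: inj_on_def zb intro!: sum.cong)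
  have "walk_sum w z (c # v) x b S = (\<Sum>d\<in>S.
      (if cyclic_letter w x = c then (if cyclic_index ?k (x + d) = b
         then of_nat (walk_count w v (x + 1) (d - 1)) * z powi d else 0) else 0) +
      (if cyclic_letter w (x - 1) = adjoint_letter c then (if cyclic_index ?k (x + d) = b
         then of_nat (walk_count w v (x - 1) (d + 1)) * z powi d else 0) else 0))"
    unfolding walk_sum_def by (intro sum.cong refl) (auto simp: distrib_right)
  also have "\<dots> = (if cyclic_letter w x = c then z * walk_sum w z v (x + 1) b ((\<lambda>d. d - 1) ` S) else 0) +
    (if cyclic_letter w (x - 1) = adjoint_letter c
     then cnj z * walk_sum w z v (x - 1) b ((\<lambda>d. d + 1) ` S) else 0)"
    unfolding fwd bwd
    by (cases "cyclic_letter w x = c"; cases "cyclic_letter w (x - 1) = adjoint_letter c")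
      (simp_all add: sum.distrib)
  finally show ?thesis .
qed

lemma index_eval_word_cycle_mat:
  assumes w: "w \<noteq> []" and z: "cnj z * z = 1" and b: "b < length w"
  defines "k \<equiv> length w"
  shows "finite S \<Longrightarrow> {- int (length v) .. int (length v)} \<subseteq> S \<Longrightarrow>
    eval_word k (cycle_mat w z) v $$ (cyclic_index k x, b) = walk_sum w z v x b S"
proof (induction v arbitrary: x S)
  case Nil
  have "0 < k" using w unfolding k_def by simp
  with Nil.prems b show ?case
    unfolding k_def by (simp add: walk_sum_Nil cyclic_index_less)
next
  case (Cons c v)
  let ?E = "eval_word k (cycle_mat w z) v"
  have "eval_word k (cycle_mat w z) (c # v) $$ (cyclic_index k x, b) =
      (if cyclic_letter w x = c then z * ?E $$ (cyclic_index k (x + 1), b) else 0) +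
      (if cyclic_letter w (x - 1) = adjoint_letter c then cnj z * ?E $$ (cyclic_index k (x - 1), b) else 0)"
    unfolding eval_word_Cons k_def
    by (rule index_eval_letter_cycle_mat_mult[OF w _ b]) (simp add: carrier_eval_word)
  also have "?E $$ (cyclic_index k (x + 1), b) = walk_sum w z v (x + 1) b ((\<lambda>d. d + (- 1)) ` S)"
    using Cons.prems by (intro Cons.IH interval_subset_image_shift) auto
  also have "?E $$ (cyclic_index k (x - 1), b) = walk_sum w z v (x - 1) b ((\<lambda>d. d + 1) ` S)"
    using Cons.prems by (intro Cons.IH interval_subset_image_shift) auto
  finally show ?case using walk_sum_Cons[OF z] by simp
qed

lemma int_dvd_bounded_cases:
  fixes d k :: int
  assumes "0 < k" "k dvd d" "\<bar>d\<bar> \<le> k"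
  shows "d \<in> {- k, 0, k}"
proof -
  obtain q where q: "d = k * q" using assms(2) by (rule dvdE)
  with assms have "k * \<bar>q\<bar> \<le> k * 1" by (simp add: abs_mult)
  then have "\<bar>q\<bar> \<le> 1" using assms(1) by (rule mult_left_le_imp_le)
  then have "q \<in> {- 1, 0, 1}" by auto
  then show ?thesis using q by auto
qed

lemma diag_eval_word_cycle_mat:
  assumes a: "a < length w" and z: "cnj z * z = 1"
  defines "k \<equiv> length w"
  shows "eval_word k (cycle_mat w z) w $$ (a, a) =
    of_nat (walk_count w w (int a) (- int k)) * z powi (- int k) + of_nat (walk_count w w (int a) 0) +
    of_nat (walk_count w w (int a) (int k)) * z powi (int k)"
proof -
  have w: "w \<noteq> []" and k: "0 < k" using a unfolding k_def by auto
  have on_diagonal: "cyclic_index k (int a + d) = a \<longleftrightarrow> int k dvd d" for d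
    using cyclic_index_eq_iff[OF k, of "int a + d" "int a"] a unfolding k_def by simp
  define f where "f d = (if cyclic_index k (int a + d) = a
    then of_nat (walk_count w w (int a) d) * z powi d else (0 :: complex))" for d
  have "eval_word k (cycle_mat w z) w $$ (a, a) = sum f {- int k .. int k}"
    using index_eval_word_cycle_mat[OF w z a, of "{- int k .. int k}" w "int a"] a
    unfolding f_def k_def walk_sum_def by simp
  also have "\<dots> = sum f {- int k, 0, int k}"
  proof (rule sum.mono_neutral_right)
    show "\<forall>d \<in> {- int k .. int k} - {- int k, 0, int k}. f d = 0"
    proof
      fix d assume "d \<in> {- int k .. int k} - {- int k, 0, int k}"
      then have "\<not> int k dvd d" using int_dvd_bounded_cases[of "int k" d] k by (auto simp: abs_le_iff)
      then show "f d = 0" unfolding f_def on_diagonal by simp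
    qed
  qed auto
  also have "\<dots> = f (- int k) + f 0 + f (int k)" using k by simp
  finally show ?thesis unfolding f_def on_diagonal by simp
qed

lemma cis_pi_half_div_power: "0 < k \<Longrightarrow> cis (pi / (2 * real k)) ^ k = \<i>"
  by (simp add: DeMoivre)

lemma Im_trace_eval_word_cycle_mat:
  assumes w: "w \<noteq> []"
  defines "k \<equiv> length w" and "\<omega> \<equiv> cis (pi / (2 * real (length w)))"
  shows "Im (trace (eval_word k (cycle_mat w \<omega>) w)) =
    (\<Sum>a<k. real (walk_count w w (int a) (int k)) - real (walk_count w w (int a) (- int k)))"
proof -
  have k: "0 < k" using w unfolding k_def by simp
  have z: "cnj \<omega> * \<omega> = 1" unfolding \<omega>_def by (simp add: cis_cnj cis_mult)
  have pos: "\<omega> powi int k = \<i>" using cis_pi_half_div_power[OF k] unfolding \<omega>_def k_def by simp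
  have neg: "\<omega> powi (- int k) = - \<i>" using pos by (simp add: power_int_minus)
  have "trace (eval_word k (cycle_mat w \<omega>) w) = (\<Sum>a<k. eval_word k (cycle_mat w \<omega>) w $$ (a, a))"
    using carrier_eval_word[of w "cycle_mat w \<omega>" k] unfolding trace_def k_def by simp
  also have "\<dots> = (\<Sum>a<k. of_nat (walk_count w w (int a) (- int k)) * - \<i> +
      of_nat (walk_count w w (int a) 0) + of_nat (walk_count w w (int a) (int k)) * \<i>)"
    using diag_eval_word_cycle_mat[OF _ z] pos neg unfolding k_def by (intro sum.cong refl) simp
  finally show ?thesis by (simp add: Im_sum sum_subtractf)
qed

lemma eq_word_adjoint_rotate_if_backward_walk:
  assumes a: "a < length w" and walk: "walk_count w w (int a) (- int (length w)) \<noteq> 0"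
  shows "w = word_adjoint (rotate a w)"
proof (rule nth_equalityI)
  fix t assume t: "t < length w"
  let ?k = "length w"
  have k: "0 < ?k" using a by linarith
  have "cyclic_letter w (int a - 1 - int t) = adjoint_letter (w ! t)"
    using walk t unfolding walk_count_backward by (auto split: if_splits)
  moreover have "cyclic_index ?k (int a - 1 - int t) = cyclic_index ?k (int (a + (?k - Suc t)))"
    unfolding cyclic_index_eq_iff[OF k] using t by (simp add: of_nat_diff)
  then have "cyclic_index ?k (int a - 1 - int t) = (a + (?k - Suc t)) mod ?k"
    by (simp only: cyclic_index_of_nat)
  ultimately show "w ! t = word_adjoint (rotate a w) ! t"
    using t by (simp add: nth_word_adjoint nth_rotate cyclic_letter_def)
qed simp

lemma self_adjoint_word_if_eigenvalues_real:
  assumes w: "w \<noteq> []"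
  defines "k \<equiv> length w" and "\<omega> \<equiv> cis (pi / (2 * real (length w)))"
  assumes real: "\<forall>\<mu>. eigenvalue (eval_word k (cycle_mat w \<omega>) w) \<mu> \<longrightarrow> \<mu> \<in> \<real>"
  shows "self_adjoint_word w"
proof (rule ccontr)
  let ?M = "eval_word k (cycle_mat w \<omega>) w"
  assume "\<not> self_adjoint_word w"
  then have no_backward: "walk_count w w (int a) (- int k) = 0" if "a < k" for a
    using eq_word_adjoint_rotate_if_backward_walk self_adjoint_word_if_eq_word_adjoint_rotate w that
    unfolding k_def by blast
  have forward: "walk_count w w 0 (int k) = 1"
    using walk_count_forward[of w w 0] unfolding k_def by (simp add: cyclic_letter_def)
  have "real (walk_count w w (int 0) (int k)) \<le> (\<Sum>a<k. real (walk_count w w (int a) (int k)))"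
    using w unfolding k_def by (intro member_le_sum) auto
  then have "1 \<le> (\<Sum>a<k. real (walk_count w w (int a) (int k)))"
    using forward by simp
  moreover have "Im (trace ?M) = (\<Sum>a<k. real (walk_count w w (int a) (int k)) -
      real (walk_count w w (int a) (- int k)))"
    unfolding k_def \<omega>_def by (rule Im_trace_eval_word_cycle_mat[OF w])
  moreover have "(\<Sum>a<k. real (walk_count w w (int a) (int k)) - real (walk_count w w (int a) (- int k))) =
      (\<Sum>a<k. real (walk_count w w (int a) (int k)))"
    by (rule sum.cong) (simp_all add: no_backward)
  ultimately have "Im (trace ?M) \<noteq> 0" by linarith
  moreover have M: "?M \<in> carrier_mat k k"
    unfolding k_def by (rule carrier_eval_word) simp
  obtain f where "trace ?M = (\<Sum>i<k. f i)" "\<forall>i<k. eigenvalue ?M (f i)"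
    using trace_eq_sum_eigenvalues[OF M] by blast
  then have "trace ?M \<in> \<real>" using real by (auto intro: sum_in_Reals)
  ultimately show False by (simp add: complex_is_Real_iff)
qed

theorem mainTheorem6:
  fixes w :: word and l :: nat
  assumes "w \<noteq> []"
    and "\<forall>(i, s) \<in> set w. i < l"
  shows "(\<forall>n \<ge> 1. \<forall>A :: nat \<Rightarrow> complex mat.
            (\<forall>i < l. A i \<in> carrier_mat n n) \<longrightarrow>
            (\<forall>\<mu>. eigenvalue (eval_word n A w) \<mu> \<longrightarrow> \<mu> \<in> \<real>))
         \<longleftrightarrow> self_adjoint_word w"
proof
  assume real: "\<forall>n \<ge> 1. \<forall>A :: nat \<Rightarrow> complex mat.
            (\<forall>i < l. A i \<in> carrier_mat n n) \<longrightarrow>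
            (\<forall>\<mu>. eigenvalue (eval_word n A w) \<mu> \<longrightarrow> \<mu> \<in> \<real>)"
  have "length w \<ge> 1" using assms(1) by (simp add: Suc_le_eq)
  then show "self_adjoint_word w"
    using real carrier_cycle_mat by (intro self_adjoint_word_if_eigenvalues_real[OF assms(1)]) blast
next
  assume sa: "self_adjoint_word w"
  show "\<forall>n \<ge> 1. \<forall>A :: nat \<Rightarrow> complex mat.
            (\<forall>i < l. A i \<in> carrier_mat n n) \<longrightarrow>
            (\<forall>\<mu>. eigenvalue (eval_word n A w) \<mu> \<longrightarrow> \<mu> \<in> \<real>)"
  proof (intro allI impI)
    fix n :: nat and A :: "nat \<Rightarrow> complex mat" and \<mu>
    assume "n \<ge> 1" and A: "\<forall>i < l. A i \<in> carrier_mat n n" and ev: "eigenvalue (eval_word n A w) \<mu>"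
    have "\<forall>x \<in> set w. A (fst x) \<in> carrier_mat n n" using A assms(2) by auto
    with sa ev show "\<mu> \<in> \<real>"
      by (intro nonnegative_complex_is_real eigenvalue_eval_self_adjoint_word_nonneg)
  qed
qed

end
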